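(* For every program $C$ and runtimes $f,g\in\mathbb{T}$ with $\mathrm{mod}(C)\cap\mathrm{Vars}(g)=\emptyset$, $$\mathsf{ert}[\![C]\!](f\oplus g)\;\preceq\;\mathsf{ert}[\![C]\!](f)\oplus g .$$
   Context: States and programs. Fix a finite set $\mathrm{Vars}$ of variables; values are $\mathbb{N}$, locations are $\mathbb{N}_{>0}$. A stack is $s\colon \mathrm{Vars}\to\mathbb{N}$; a heap is a partial map $h$ from a finite set $\mathrm{dom}(h)\subseteq\mathbb{N}_{>0}$ to $\mathbb{N}$. $h_1\perp h_2$ means disjoint domains; then $h_1\star h_2$ is their union; $h_\emptyset$ is the empty heap. $\mathsf{States}$ is the set of pairs $(s,h)$. $s(e)$ is the value of a (heap-independent) arithmetic expression $e$ under $s$, $s\models\varphi$ means the Boolean expression $\varphi$ holds under $s$, $s[x\mapsto v]$ is the updated stack. Programs are generated by $C ::= \mathtt{tick}(e) \mid x:=e \mid x:=\mathtt{alloc}(e) \mid \langle e\rangle:=e' \mid x:=\langle e\rangle \mid \mathtt{free}(e) \mid \{C\}[p]\{C\} \mid \mathtt{if}(\varphi)\{C\}\mathtt{else}\{C\} \mid C;C \mid \mathtt{while}(\varphi)\{C\}$, where $p$ is an expression with $s(p)\in[0,1]\cap\mathbb{Q}$ for all $s$. $\mathrm{mod}(C)$ is the set of variables potentially modified by $C$, i.e. the variables $x$ occurring as the target of $x:=e$, $x:=\mathtt{alloc}(e)$ or $x:=\langle e\rangle$ in $C$. For a runtime $g$, $x\notin\mathrm{Vars}(g)$ means $g(s[x\mapsto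 v],h)=g(s,h)$ for all $(s,h)$ and $v$. Runtimes. $\mathbb{T}$ is the set of functions $\mathsf{States}\to[0,\infty]$, ordered pointwise by $\preceq$; arithmetic is pointwise with $0\cdot\infty=0$. $[\varphi]$ is the $0/1$-valued Iverson bracket. Truncated subtraction: $a\dot- b=\max(a-b,0)$, $\infty\dot- b=\infty$ for finite $b$, $a\dot-\infty=0$. $(f\oplus g)(s,h)=\min\{f(s,h_1)+g(s,h_2)\mid h=h_1\star h_2\}$; $(f \mathbin{-\!\!\ominus} g)(s,h)=\sup\{g(s,h\star h')\dot- f(s,h')\mid h'\perp h\}$; $(\inf y\colon f)(s,h)=\inf_{v\in\mathbb{N}} f(s[y\mapsto v],h)$, $(\sup y\colon f)(s,h)=\sup_{v\in\mathbb{N}}f(s[y\mapsto v],h)$; $f[x/e](s,h)=f(s[x\mapsto s(e)],h)$. $\mathsf{tm}(e)(s,h)=s(e)$ if $h=h_\emptyset$, else $\infty$; $[e\mapsto e'](s,h)=0$ if $\mathrm{dom}(h)=\{s(e)\}$ and $h(s(e))=s(e')$, else $\infty$; $[e\mapsto -](s,h)=0$ if $\mathrm{dom}(h)=\{s(e)\}$, else $\infty$; $\bigoplus_{i=1}^{e} f_i$ is the separating sum over $i=1,\dots,s(e)$ (empty one: $[\mathsf{emp}]$, which is $0$ if $h=h_\emptyset$, else $\infty$). Expected runtime transformer $\mathsf{ert}[\![C]\!]\colon\mathbb{T}\to\mathbb{T}$ (with $v$ fresh): $\mathsf{ert}[\![\mathtt{tick}(e)]\!](f)=\mathsf{tm}(e)\oplus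 f$; $\mathsf{ert}[\![x:=e]\!](f)=f[x/e]$; $\mathsf{ert}[\![x:=\mathtt{alloc}(e)]\!](f)=\sup v\colon (\bigoplus_{i=1}^{e}[v+i-1\mapsto 0])\mathbin{-\!\!\ominus} f[x/v]$; $\mathsf{ert}[\![\langle e\rangle:=e']\!](f)=[e\mapsto-]\oplus([e\mapsto e']\mathbin{-\!\!\ominus} f)$; $\mathsf{ert}[\![x:=\langle e\rangle]\!](f)=\inf v\colon [e\mapsto v]\oplus([e\mapsto v]\mathbin{-\!\!\ominus} f[x/v])$; $\mathsf{ert}[\![\mathtt{free}(e)]\!](f)=[e\mapsto-]\oplus f$; $\mathsf{ert}[\![C_1;C_2]\!](f)=\mathsf{ert}[\![C_1]\!](\mathsf{ert}[\![C_2]\!](f))$; conditional: $[\varphi]\cdot\mathsf{ert}[\![C_1]\!](f)+[\neg\varphi]\cdot\mathsf{ert}[\![C_2]\!](f)$; probabilistic choice: $p\cdot\mathsf{ert}[\![C_1]\!](f)+(1-p)\cdot\mathsf{ert}[\![C_2]\!](f)$; $\mathsf{ert}[\![\mathtt{while}(\varphi)\{C\}]\!](f)=\mathrm{lfp}\, g.\ [\neg\varphi]\cdot f+[\varphi]\cdot\mathsf{ert}[\![C]\!](g)$ (least fixed point in $(\mathbb{T},\preceq)$). *)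

theory Defs
  imports "HOL-Library.Extended_Nonnegative_Real"
begin

type_synonym 'v stack = "'v \<Rightarrow> nat"

typedef heap = "{h :: nat \<Rightarrow> nat option. finite (dom h) \<and> 0 \<notin> dom h}"
  morphisms hmap Heap
  by (rule exI[of _ Map.empty]) auto

definition hemp :: heap where "hemp = Heap Map.empty"

definition hdisj :: "heap \<Rightarrow> heap \<Rightarrow> bool" where
  "hdisj h1 h2 \<longleftrightarrow> dom (hmap h1) \<inter> dom (hmap h2) = {}"

definition hunion :: "heap \<Rightarrow> heap \<Rightarrow> heap" where
  "hunion h1 h2 = Heap (hmap h1 ++ hmap h2)"

type_synonym 'v state = "'v stack \<times> heap"
type_synonym 'v runtime = "'v state \<Rightarrow> ennreal"

type_synonym 'v aexp = "'v stack \<Rightarrow> nat"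
type_synonym 'v bexp = "'v stack \<Rightarrow> bool"
type_synonym 'v pexp = "'v stack \<Rightarrow> rat"

datatype 'v prog =
    Tick "'v aexp"
  | Assign 'v "'v aexp"
  | Alloc 'v "'v aexp"
  | Store "'v aexp" "'v aexp"
  | Load 'v "'v aexp"
  | Free "'v aexp"
  | PChoice "'v prog" "'v pexp" "'v prog"
  | If "'v bexp" "'v prog" "'v prog"
  | Seq "'v prog" "'v prog"
  | While "'v bexp" "'v prog"

primrec wf_prog :: "'v prog \<Rightarrow> bool" where
  "wf_prog (Tick e) = True"
| "wf_prog (Assign x e) = True"
| "wf_prog (Alloc x e) = True"
| "wf_prog (Store e e') = True"
| "wf_prog (Load x e) = True"
| "wf_prog (Free e) = True"
| "wf_prog (PChoice C1 p C2) = ((\<forall>s. 0 \<le> p s \<and> p s \<le> 1) \<and> wf_prog C1 \<and> wf_prog C2)"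
| "wf_prog (If b C1 C2) = (wf_prog C1 \<and> wf_prog C2)"
| "wf_prog (Seq C1 C2) = (wf_prog C1 \<and> wf_prog C2)"
| "wf_prog (While b C) = wf_prog C"

primrec modv :: "'v prog \<Rightarrow> 'v set" where
  "modv (Tick e) = {}"
| "modv (Assign x e) = {x}"
| "modv (Alloc x e) = {x}"
| "modv (Store e e') = {}"
| "modv (Load x e) = {x}"
| "modv (Free e) = {}"
| "modv (PChoice C1 p C2) = modv C1 \<union> modv C2"
| "modv (If b C1 C2) = modv C1 \<union> modv C2"
| "modv (Seq C1 C2) = modv C1 \<union> modv C2"
| "modv (While b C) = modv C"

definition not_in_vars :: "'v \<Rightarrow> 'v runtime \<Rightarrow> bool" where
  "not_in_vars x g \<longleftrightarrow> (\<forall>s h v. g (s(x := v), h) = g (s, h))"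

text \<open>Truncated subtraction with \<open>a -. \<infinity> = 0\<close>.\<close>
definition tsub :: "ennreal \<Rightarrow> ennreal \<Rightarrow> ennreal" where
  "tsub a b = (if b = top then 0 else if a = top then top else a - b)"

definition sepcon :: "'v runtime \<Rightarrow> 'v runtime \<Rightarrow> 'v runtime" (infixl "\<oplus>\<^sub>s" 65) where
  "sepcon f g = (\<lambda>(s, h). Inf {f (s, h1) + g (s, h2) | h1 h2. hdisj h1 h2 \<and> h = hunion h1 h2})"

definition sepimp :: "'v runtime \<Rightarrow> 'v runtime \<Rightarrow> 'v runtime" where
  "sepimp f g = (\<lambda>(s, h). Sup {tsub (g (s, hunion h h')) (f (s, h')) | h'. hdisj h' h})"

definition emp :: "'v runtime" where
  "emp = (\<lambda>(s, h). if h = hemp then 0 else top)"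

definition tm :: "'v aexp \<Rightarrow> 'v runtime" where
  "tm e = (\<lambda>(s, h). if h = hemp then ennreal (real (e s)) else top)"

definition pto :: "'v aexp \<Rightarrow> 'v aexp \<Rightarrow> 'v runtime" where
  "pto e e' = (\<lambda>(s, h). if dom (hmap h) = {e s} \<and> hmap h (e s) = Some (e' s) then 0 else top)"

definition pto_any :: "'v aexp \<Rightarrow> 'v runtime" where
  "pto_any e = (\<lambda>(s, h). if dom (hmap h) = {e s} then 0 else top)"

text \<open>Iterated separating sum over i = 1..n.\<close>
primrec bigsep_n :: "(nat \<Rightarrow> 'v runtime) \<Rightarrow> nat \<Rightarrow> 'v runtime" where
  "bigsep_n F 0 = emp"
| "bigsep_n F (Suc n) = bigsep_n F n \<oplus>\<^sub>s F (Suc n)"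

definition bigsep :: "(nat \<Rightarrow> 'v runtime) \<Rightarrow> 'v aexp \<Rightarrow> 'v runtime" where
  "bigsep F e = (\<lambda>(s, h). bigsep_n F (e s) (s, h))"

definition subst :: "'v runtime \<Rightarrow> 'v \<Rightarrow> 'v aexp \<Rightarrow> 'v runtime" where
  "subst f x e = (\<lambda>(s, h). f (s(x := e s), h))"

definition iv :: "'v bexp \<Rightarrow> 'v runtime \<Rightarrow> 'v runtime" where
  "iv b f = (\<lambda>(s, h). (if b s then 1 else 0) * f (s, h))"

primrec ert :: "'v prog \<Rightarrow> 'v runtime \<Rightarrow> 'v runtime" where
  "ert (Tick e) f = tm e \<oplus>\<^sub>s f"
| "ert (Assign x e) f = subst f x e"
| "ert (Alloc x e) f = (\<lambda>\<sigma>. SUP v::nat.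
      sepimp (bigsep (\<lambda>i. pto (\<lambda>_. v + i - 1) (\<lambda>_. 0)) e) (subst f x (\<lambda>_. v)) \<sigma>)"
| "ert (Store e e') f = pto_any e \<oplus>\<^sub>s sepimp (pto e e') f"
| "ert (Load x e) f = (\<lambda>\<sigma>. INF v::nat.
      (pto e (\<lambda>_. v) \<oplus>\<^sub>s sepimp (pto e (\<lambda>_. v)) (subst f x (\<lambda>_. v))) \<sigma>)"
| "ert (Free e) f = pto_any e \<oplus>\<^sub>s f"
| "ert (PChoice C1 p C2) f = (\<lambda>(s, h).
      ennreal (real_of_rat (p s)) * ert C1 f (s, h)
      + ennreal (1 - real_of_rat (p s)) * ert C2 f (s, h))"
| "ert (If b C1 C2) f = (\<lambda>\<sigma>. iv b (ert C1 f) \<sigma> + iv (\<lambda>s. \<not> b s) (ert C2 f) \<sigma>)"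
| "ert (Seq C1 C2) f = ert C1 (ert C2 f)"
| "ert (While b C) f = lfp (\<lambda>X \<sigma>. iv (\<lambda>s. \<not> b s) f \<sigma> + iv b (ert C X) \<sigma>)"

end

theory Submission
  imports Defs
begin

(* Every primitive transformer is built from substitution, separating
   sums and magic wands, and each of these lets a frame g be pulled out to the right:
   separating sums are associative, a magic wand B -\<ominus> (F \<oplus> g) is dominated by (B -\<ominus> F) \<oplus> g
   because the heap extension supplied to the wand can be merged into the part of the heap not
   used by g, and substitution of x commutes with \<oplus> g when x \<notin> Vars(g). Suprema, infima and
   convex combinations (probabilistic choice, conditionals) preserve such bounds, and for loops
   X \<oplus> g, with X the least fixed point for f, is a prefixed point of the characteristic
   function for f \<oplus> g (Park induction). *)

lemma hmap_hunion: "hmap (hunion h1 h2) = hmap h1 ++ hmap h2"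
proof -
  have "finite (dom (hmap h)) \<and> 0 \<notin> dom (hmap h)" for h
    using hmap[of h] by simp
  then show ?thesis
    unfolding hunion_def by (subst Heap_inverse) auto
qed

lemma hunion_assoc: "hunion (hunion h1 h2) h3 = hunion h1 (hunion h2 h3)"
  by (simp add: hmap_inject[symmetric] hmap_hunion)

lemma hunion_commute: "hdisj h1 h2 \<Longrightarrow> hunion h1 h2 = hunion h2 h1"
  unfolding hmap_inject[symmetric] hmap_hunion hdisj_def by (rule map_add_comm)

lemma hdisj_commute: "hdisj h1 h2 \<longleftrightarrow> hdisj h2 h1"
  by (auto simp: hdisj_def)

lemma hdisj_hunion_left: "hdisj (hunion h1 h2) h \<longleftrightarrow> hdisj h1 h \<and> hdisj h2 h"
  by (auto simp: hdisj_def hmap_hunion)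

lemma hdisj_hunion_right: "hdisj h (hunion h1 h2) \<longleftrightarrow> hdisj h h1 \<and> hdisj h h2"
  by (auto simp: hdisj_def hmap_hunion)

lemma Inf_add_const_ennreal: "Inf S + (c::ennreal) = (INF x\<in>S. x + c)"
proof (cases "S = {}")
  case False
  show ?thesis
    using continuous_at_Inf_mono[of "\<lambda>x. x + c" S] False
      continuous_add[of "at_right (Inf S)" "\<lambda>x. x" "\<lambda>x. c"]
    by (auto simp: mono_def add_right_mono)
qed simp

lemma tsub_mono: "a \<le> a' \<Longrightarrow> tsub a b \<le> tsub a' b"
  by (auto simp: tsub_def ennreal_minus_mono top_unique)

lemma tsub_add_le: "tsub (a + c) b \<le> tsub a b + c"
  using add_diff_le_ennreal[of c a b] by (auto simp: tsub_def top_unique add.commute)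

lemma sepcon_le: "hdisj h1 h2 \<Longrightarrow> (f \<oplus>\<^sub>s g) (s, hunion h1 h2) \<le> f (s, h1) + g (s, h2)"
  unfolding sepcon_def by (auto intro: Inf_lower)

lemma sepcon_greatest:
  "(\<And>h1 h2. hdisj h1 h2 \<Longrightarrow> h = hunion h1 h2 \<Longrightarrow> L \<le> f (s, h1) + g (s, h2))
    \<Longrightarrow> L \<le> (f \<oplus>\<^sub>s g) (s, h)"
  unfolding sepcon_def by (auto intro: Inf_greatest)

lemma sepcon_mono: "f \<le> f' \<Longrightarrow> g \<le> g' \<Longrightarrow> f \<oplus>\<^sub>s g \<le> f' \<oplus>\<^sub>s g'"
  unfolding sepcon_def le_fun_def
  by (fastforce intro!: Inf_mono add_mono)

lemma sepcon_assoc_le: "A \<oplus>\<^sub>s (f \<oplus>\<^sub>s g) \<le> (A \<oplus>\<^sub>s f) \<oplus>\<^sub>s g"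
proof (intro le_funI, clarify, rule sepcon_greatest)
  fix s h h12 h3
  assume h12: "hdisj h12 h3" and h: "h = hunion h12 h3"
  have "(A \<oplus>\<^sub>s (f \<oplus>\<^sub>s g)) (s, h) \<le> A (s, h1) + f (s, h2) + g (s, h3)"
    if "hdisj h1 h2" "h12 = hunion h1 h2" for h1 h2
  proof -
    have disj: "hdisj h2 h3" "hdisj h1 (hunion h2 h3)"
      using that h12 by (simp_all add: hdisj_hunion_left hdisj_hunion_right)
    have "(A \<oplus>\<^sub>s (f \<oplus>\<^sub>s g)) (s, h) \<le> A (s, h1) + (f \<oplus>\<^sub>s g) (s, hunion h2 h3)"
      using sepcon_le[OF disj(2)] by (simp add: h that hunion_assoc)
    also have "\<dots> \<le> A (s, h1) + (f (s, h2) + g (s, h3))"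
      using sepcon_le[OF disj(1)] by (rule add_left_mono)
    finally show ?thesis by (simp add: add.assoc)
  qed
  then show "(A \<oplus>\<^sub>s (f \<oplus>\<^sub>s g)) (s, h) \<le> (A \<oplus>\<^sub>s f) (s, h12) + g (s, h3)"
    unfolding sepcon_def[of A f] case_prod_conv Inf_add_const_ennreal
    by (auto intro!: INF_greatest)
qed

lemma sepimp_mono: "F \<le> F' \<Longrightarrow> sepimp B F \<le> sepimp B F'"
  unfolding sepimp_def le_fun_def
  by (fastforce intro!: Sup_mono tsub_mono)

lemma sepimp_frame: "sepimp B (F \<oplus>\<^sub>s g) \<le> sepimp B F \<oplus>\<^sub>s g"
proof (intro le_funI, clarify, rule sepcon_greatest)
  fix s h h1 h2
  assume h12: "hdisj h1 h2" and h: "h = hunion h1 h2"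
  have "tsub ((F \<oplus>\<^sub>s g) (s, hunion h h')) (B (s, h')) \<le> sepimp B F (s, h1) + g (s, h2)"
    if h': "hdisj h' h" for h'
  proof -
    have disj: "hdisj h' h1" "hdisj (hunion h1 h') h2"
      using h' h12 by (auto simp: h hdisj_hunion_left hdisj_hunion_right hdisj_commute)
    have "hdisj h2 h'"
      using h' by (simp add: h hdisj_hunion_right hdisj_commute)
    then have "hunion h h' = hunion (hunion h1 h') h2"
      by (simp add: h hunion_assoc hunion_commute)
    then have "tsub ((F \<oplus>\<^sub>s g) (s, hunion h h')) (B (s, h'))
        \<le> tsub (F (s, hunion h1 h') + g (s, h2)) (B (s, h'))"
      by (simp add: tsub_mono[OF sepcon_le[OF disj(2)]])
    also have "\<dots> \<le> tsub (F (s, hunion h1 h')) (B (s, h')) + g (s, h2)"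
      by (rule tsub_add_le)
    also have "\<dots> \<le> sepimp B F (s, h1) + g (s, h2)"
      using disj(1) unfolding sepimp_def by (auto intro!: add_right_mono Sup_upper)
    finally show ?thesis .
  qed
  then show "sepimp B (F \<oplus>\<^sub>s g) (s, h) \<le> sepimp B F (s, h1) + g (s, h2)"
    unfolding sepimp_def by (auto intro!: Sup_least)
qed

lemma sepcon_sepimp_frame: "A \<oplus>\<^sub>s sepimp B (F \<oplus>\<^sub>s g) \<le> (A \<oplus>\<^sub>s sepimp B F) \<oplus>\<^sub>s g"
  using sepcon_mono[OF order_refl sepimp_frame] sepcon_assoc_le by (rule order_trans)

lemma subst_mono: "F \<le> F' \<Longrightarrow> subst F x e \<le> subst F' x e"
  unfolding subst_def le_fun_def by auto

lemma subst_sepcon: "not_in_vars x g \<Longrightarrow> subst (f \<oplus>\<^sub>s g) x e = subst f x e \<oplus>\<^sub>s g"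
  by (auto simp: fun_eq_iff subst_def sepcon_def not_in_vars_def)

lemma SUP_sepcon_le: "(\<lambda>\<sigma>. SUP v\<in>I. (A v \<oplus>\<^sub>s g) \<sigma>) \<le> (\<lambda>\<sigma>. SUP v\<in>I. A v \<sigma>) \<oplus>\<^sub>s g"
proof (intro le_funI SUP_least)
  fix \<sigma> v
  assume "v \<in> I"
  then have "A v \<oplus>\<^sub>s g \<le> (\<lambda>\<sigma>. SUP v\<in>I. A v \<sigma>) \<oplus>\<^sub>s g"
    by (intro sepcon_mono le_funI SUP_upper order_refl)
  then show "(A v \<oplus>\<^sub>s g) \<sigma> \<le> ((\<lambda>\<sigma>. SUP v\<in>I. A v \<sigma>) \<oplus>\<^sub>s g) \<sigma>"
    by (rule le_funD)
qed

lemma INF_sepcon_le: "(\<lambda>\<sigma>. INF v\<in>I. (A v \<oplus>\<^sub>s g) \<sigma>) \<le> (\<lambda>\<sigma>. INF v\<in>I. A v \<sigma>) \<oplus>\<^sub>s g"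
proof (intro le_funI, clarify, rule sepcon_greatest)
  fix s h h1 h2
  assume "hdisj h1 h2" "h = hunion h1 h2"
  then have "(INF v\<in>I. (A v \<oplus>\<^sub>s g) (s, h)) \<le> A v (s, h1) + g (s, h2)" if "v \<in> I" for v
    using sepcon_le that by (blast intro: INF_lower2)
  then show "(INF v\<in>I. (A v \<oplus>\<^sub>s g) (s, h)) \<le> (INF v\<in>I. A v (s, h1)) + g (s, h2)"
    unfolding Inf_add_const_ennreal image_image by (rule INF_greatest)
qed

lemma weighted_sum_sepcon_le:
  fixes a b :: "'v stack \<Rightarrow> ennreal"
  assumes weights: "\<And>s. a s + b s \<le> 1"
  shows "(\<lambda>(s, h). a s * (A \<oplus>\<^sub>s g) (s, h) + b s * (B \<oplus>\<^sub>s g) (s, h))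
    \<le> (\<lambda>(s, h). a s * A (s, h) + b s * B (s, h)) \<oplus>\<^sub>s g"
proof (intro le_funI, clarify, rule sepcon_greatest)
  fix s h h1 h2
  assume h12: "hdisj h1 h2" and h: "h = hunion h1 h2"
  have "a s * (A \<oplus>\<^sub>s g) (s, h) + b s * (B \<oplus>\<^sub>s g) (s, h)
      \<le> a s * (A (s, h1) + g (s, h2)) + b s * (B (s, h1) + g (s, h2))"
    unfolding h by (intro add_mono mult_left_mono sepcon_le[OF h12] zero_le)
  also have "\<dots> = a s * A (s, h1) + b s * B (s, h1) + (a s + b s) * g (s, h2)"
    by (simp add: algebra_simps)
  also have "\<dots> \<le> a s * A (s, h1) + b s * B (s, h1) + g (s, h2)"
    using mult_right_mono[OF weights, of "g (s, h2)"] by (simp add: add_left_mono)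
  finally show "a s * (A \<oplus>\<^sub>s g) (s, h) + b s * (B \<oplus>\<^sub>s g) (s, h)
      \<le> (\<lambda>(s, h). a s * A (s, h) + b s * B (s, h)) (s, h1) + g (s, h2)"
    by simp
qed

lemma iv_mono: "F \<le> F' \<Longrightarrow> iv b F \<le> iv b F'"
  unfolding iv_def le_fun_def by (auto intro: mult_left_mono)

lemma iv_sum_sepcon_le:
  assumes "\<And>s. \<not> (b s \<and> c s)"
  shows "(\<lambda>\<sigma>. iv b (A \<oplus>\<^sub>s g) \<sigma> + iv c (B \<oplus>\<^sub>s g) \<sigma>) \<le> (\<lambda>\<sigma>. iv b A \<sigma> + iv c B \<sigma>) \<oplus>\<^sub>s g"
proof -
  have iv_sum: "(\<lambda>\<sigma>. iv b F \<sigma> + iv c G \<sigma>)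
      = (\<lambda>(s, h). (if b s then 1 else 0) * F (s, h) + (if c s then 1 else 0) * G (s, h))" for F G
    by (auto simp: fun_eq_iff iv_def)
  show ?thesis
    unfolding iv_sum using assms by (intro weighted_sum_sepcon_le) auto
qed

lemma ert_mono: "f \<le> f' \<Longrightarrow> ert C f \<le> ert C f'"
proof (induction C arbitrary: f f')
  case (Alloc x e)
  then show ?case
    by (auto simp: le_fun_def intro!: SUP_subset_mono[OF order_refl] sepimp_mono[THEN le_funD] subst_mono)
next
  case (Load x e)
  then show ?case
    by (auto simp: le_fun_def intro!: INF_mono sepcon_mono[THEN le_funD] sepimp_mono subst_mono)
next
  case (PChoice C1 p C2)
  then show ?case
    by (fastforce simp: le_fun_def intro!: add_mono mult_left_mono)
next
  case (If b C1 C2)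
  then show ?case
    by (fastforce simp: le_fun_def intro!: add_mono iv_mono[THEN le_funD])
next
  case (While b C)
  show ?case
    unfolding ert.simps by (intro While.prems lfp_mono le_funI add_mono iv_mono[THEN le_funD] order_refl)
qed (simp_all add: sepcon_mono sepimp_mono subst_mono)

lemma ert_While_frame:
  fixes C :: "'v prog"
  assumes body: "\<And>X. ert C (X \<oplus>\<^sub>s g) \<le> ert C X \<oplus>\<^sub>s g"
  shows "ert (While b C) (f \<oplus>\<^sub>s g) \<le> ert (While b C) f \<oplus>\<^sub>s g"
proof -
  define \<Phi> where "\<Phi> F = (\<lambda>X \<sigma>. iv (\<lambda>s. \<not> b s) F \<sigma> + iv b (ert C X) \<sigma>)" for F
  have "mono (\<Phi> f)"
  proof (rule monoI)
    fix X Y :: "'v runtime"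
    assume "X \<le> Y"
    then show "\<Phi> f X \<le> \<Phi> f Y"
      unfolding \<Phi>_def by (intro le_funI add_mono order_refl iv_mono[THEN le_funD] ert_mono[OF \<open>X \<le> Y\<close>])
  qed
  then have fixpoint: "\<Phi> f (lfp (\<Phi> f)) = lfp (\<Phi> f)"
    by (rule lfp_fixpoint)
  have "\<Phi> (f \<oplus>\<^sub>s g) (lfp (\<Phi> f) \<oplus>\<^sub>s g)
      \<le> (\<lambda>\<sigma>. iv (\<lambda>s. \<not> b s) (f \<oplus>\<^sub>s g) \<sigma> + iv b (ert C (lfp (\<Phi> f)) \<oplus>\<^sub>s g) \<sigma>)"
    unfolding \<Phi>_def by (intro le_funI add_mono order_refl iv_mono[OF body, THEN le_funD])
  also have "\<dots> \<le> \<Phi> f (lfp (\<Phi> f)) \<oplus>\<^sub>s g"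
    unfolding \<Phi>_def by (rule iv_sum_sepcon_le) simp
  finally have "\<Phi> (f \<oplus>\<^sub>s g) (lfp (\<Phi> f) \<oplus>\<^sub>s g) \<le> lfp (\<Phi> f) \<oplus>\<^sub>s g"
    unfolding fixpoint .
  then have "lfp (\<Phi> (f \<oplus>\<^sub>s g)) \<le> lfp (\<Phi> f) \<oplus>\<^sub>s g"
    by (rule lfp_lowerbound)
  then show ?thesis
    by (simp add: \<Phi>_def)
qed

lemma ert_frame:
  assumes "wf_prog C" and "\<forall>x \<in> modv C. not_in_vars x g"
  shows "ert C (f \<oplus>\<^sub>s g) \<le> ert C f \<oplus>\<^sub>s g"
  using assms
proof (induction C arbitrary: f)
  case (Tick e)
  then show ?case by (simp add: sepcon_assoc_le)
next
  case (Assign x e)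
  then show ?case by (simp add: subst_sepcon)
next
  case (Alloc x e)
  let ?B = "\<lambda>v::nat. bigsep (\<lambda>i. pto (\<lambda>_. v + i - 1) (\<lambda>_. 0)) e"
  have "ert (Alloc x e) (f \<oplus>\<^sub>s g) \<le> (\<lambda>\<sigma>. SUP v. (sepimp (?B v) (subst f x (\<lambda>_. v)) \<oplus>\<^sub>s g) \<sigma>)"
    using Alloc.prems
    by (auto simp: subst_sepcon le_fun_def intro!: SUP_mono' sepimp_frame[THEN le_funD])
  also have "\<dots> \<le> ert (Alloc x e) f \<oplus>\<^sub>s g"
    unfolding ert.simps by (rule SUP_sepcon_le)
  finally show ?case .
next
  case (Store e e')
  then show ?case by (simp add: sepcon_sepimp_frame)
next
  case (Load x e)
  let ?P = "\<lambda>v::nat. pto e (\<lambda>_. v)"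
  have "ert (Load x e) (f \<oplus>\<^sub>s g)
      \<le> (\<lambda>\<sigma>. INF v. ((?P v \<oplus>\<^sub>s sepimp (?P v) (subst f x (\<lambda>_. v))) \<oplus>\<^sub>s g) \<sigma>)"
    using Load.prems
    by (auto simp: subst_sepcon le_fun_def intro!: INF_mono' sepcon_sepimp_frame[THEN le_funD])
  also have "\<dots> \<le> ert (Load x e) f \<oplus>\<^sub>s g"
    unfolding ert.simps by (rule INF_sepcon_le)
  finally show ?case .
next
  case (Free e)
  then show ?case by (simp add: sepcon_assoc_le)
next
  case (PChoice C1 p C2)
  have weights: "ennreal (real_of_rat (p s)) + ennreal (1 - real_of_rat (p s)) \<le> 1" for s
  proof -
    have "0 \<le> real_of_rat (p s)" "real_of_rat (p s) \<le> 1"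
      using PChoice.prems by simp_all
    then show ?thesis by (simp flip: ennreal_plus)
  qed
  have "ert (PChoice C1 p C2) (f \<oplus>\<^sub>s g) \<le> (\<lambda>(s, h).
      ennreal (real_of_rat (p s)) * (ert C1 f \<oplus>\<^sub>s g) (s, h)
      + ennreal (1 - real_of_rat (p s)) * (ert C2 f \<oplus>\<^sub>s g) (s, h))"
    using PChoice by (auto simp: le_fun_def intro!: add_mono mult_left_mono)
  also have "\<dots> \<le> ert (PChoice C1 p C2) f \<oplus>\<^sub>s g"
    unfolding ert.simps by (rule weighted_sum_sepcon_le[OF weights])
  finally show ?case .
next
  case (If b C1 C2)
  have "ert (If b C1 C2) (f \<oplus>\<^sub>s g)
      \<le> (\<lambda>\<sigma>. iv b (ert C1 f \<oplus>\<^sub>s g) \<sigma> + iv (\<lambda>s. \<not> b s) (ert C2 f \<oplus>\<^sub>s g) \<sigma>)"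
    using If by (auto simp: le_fun_def intro!: add_mono iv_mono[THEN le_funD])
  also have "\<dots> \<le> ert (If b C1 C2) f \<oplus>\<^sub>s g"
    unfolding ert.simps by (rule iv_sum_sepcon_le) simp
  finally show ?case .
next
  case (Seq C1 C2)
  then have "ert C1 (ert C2 (f \<oplus>\<^sub>s g)) \<le> ert C1 (ert C2 f \<oplus>\<^sub>s g)"
    by (intro ert_mono) auto
  also have "\<dots> \<le> ert C1 (ert C2 f) \<oplus>\<^sub>s g"
    using Seq by auto
  finally show ?case by simp
next
  case (While b C)
  then show ?case by (intro ert_While_frame) simp
qed

theorem mainTheorem9:
  fixes C :: "('v::finite) prog" and f g :: "'v runtime"
  assumes "wf_prog C"
    and "\<forall>x \<in> modv C. not_in_vars x g"
  shows "ert C (f \<oplus>\<^sub>s g) \<le> ert C f \<oplus>\<^sub>s g"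
  using assms by (rule ert_frame)

end
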